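(* For any fixed parameters $p_0>0$, $r>1$ and any fixed (bid-independent) processing order of the bidders, the multiplicative price update algorithm, applied to the declared types, is a truthful mechanism without money and with verification for CAs with unknown $k$-minded bidders.
   Context: Multi-unit combinatorial auction: a set $\mathsf U$ of $m$ goods, each with supply $b\ge1$; $n$ bidders. True type of bidder $i$: $t_i=(v_i,\mathcal S_i)$ with $\mathcal S_i$ a private collection of $k$ nonempty subsets of $\mathsf U$ and $v_i:\mathcal S_i\to\mathbb R_{\ge0}$ private, extended by $v_i(T)=\max\{v_i(S'):S'\in\mathcal S_i,S'\subseteq T\}$ ($0$ if none). Declarations $c=(w,\mathcal W)$ have the same form; $D_i$ is the set of all declarations. Multiplicative price update algorithm on declarations $(w_i,\mathcal W_i)$: $p_e^1=p_0$ for every good; for each bidder $i$ in the fixed order: let $S_i$ maximize $w_i(S)$ among $S\in\mathcal W_i$ with $w_i(S)\ge\sum_{e\in S}p_e^i$ ($S_i=\emptyset$ if none); multiply the price of each $e\in S_i$ by $r$; allocate $S_i$ to $i$. Verification: bidder $i$ with true type $t_i$ facing $\mathbf b_{-i}$ may declare $b_i=(z,\mathcal T)$ only if $z(A_i(b_i,\mathbf b_{-i}))\le v_i(A_i(b_i,\mathbf b_{-i}))$. A mechanism $A$ is truthful without money and with verification if for all $i$, $\mathbf b_{-i}$, true types $t_i$ and declarations $b_i$ permitted by verification, $v_i(A_i(t_i,\mathbf b_{-i}))\ge v_i(A_i(b_i,\mathbf b_{-i}))$. *)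

theory Defs
  imports Complex_Main
begin

text \<open>A declaration (or a type) of a bidder is a pair (w, W): W is a collection of
  bundles (subsets of the goods) and w gives the value of each bundle in W
  (values of w outside W are irrelevant).\<close>
type_synonym 'g decl = "('g set \<Rightarrow> real) \<times> 'g set set"

definition valid_decl :: "'g set \<Rightarrow> nat \<Rightarrow> 'g decl \<Rightarrow> bool" where
  "valid_decl U k d \<longleftrightarrow>
     snd d \<subseteq> Pow U \<and> finite (snd d) \<and> card (snd d) = k \<and> {} \<notin> snd d \<and>
     (\<forall>S\<in>snd d. fst d S \<ge> 0)"

definition ext_val :: "'g decl \<Rightarrow> 'g set \<Rightarrow> real" where
  "ext_val d T =
     (if \<exists>S\<in>snd d. S \<subseteq> T then Max {fst d S | S. S \<in> snd d \<and> S \<subseteq> T} else 0)"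

definition bundle_price :: "('g \<Rightarrow> real) \<Rightarrow> 'g set \<Rightarrow> real" where
  "bundle_price p S = (\<Sum>e\<in>S. p e)"

definition affordable :: "'g decl \<Rightarrow> ('g \<Rightarrow> real) \<Rightarrow> 'g set set" where
  "affordable d p = {S \<in> snd d. fst d S \<ge> bundle_price p S}"

definition choose_bundle :: "'g decl \<Rightarrow> ('g \<Rightarrow> real) \<Rightarrow> 'g set" where
  "choose_bundle d p =
     (if affordable d p = {} then {}
      else (SOME S. S \<in> affordable d p \<and> (\<forall>S'\<in>affordable d p. fst d S' \<le> fst d S)))"

fun mpu_run :: "real \<Rightarrow> (nat \<Rightarrow> 'g decl) \<Rightarrow> nat list \<Rightarrow> ('g \<Rightarrow> real) \<Rightarrow> nat \<Rightarrow> 'g set" where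
  "mpu_run r bids [] p = (\<lambda>i. {})"
| "mpu_run r bids (i # is) p =
     (let S = choose_bundle (bids i) p
      in (mpu_run r bids is (\<lambda>e. if e \<in> S then r * p e else p e))(i := S))"

definition mpu_alloc :: "real \<Rightarrow> real \<Rightarrow> nat list \<Rightarrow> (nat \<Rightarrow> 'g decl) \<Rightarrow> nat \<Rightarrow> 'g set" where
  "mpu_alloc p0 r ord bids = mpu_run r bids ord (\<lambda>e. p0)"

definition truthful_verif ::
  "'g set \<Rightarrow> nat \<Rightarrow> nat \<Rightarrow> ((nat \<Rightarrow> 'g decl) \<Rightarrow> nat \<Rightarrow> 'g set) \<Rightarrow> bool" where
  "truthful_verif U k n A \<longleftrightarrow>
     (\<forall>i<n. \<forall>bids t d.
        (\<forall>j<n. j \<noteq> i \<longrightarrow> valid_decl U k (bids j)) \<longrightarrow>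
        valid_decl U k t \<longrightarrow> valid_decl U k d \<longrightarrow>
        ext_val d (A (bids(i := d)) i) \<le> ext_val t (A (bids(i := d)) i) \<longrightarrow>
        ext_val t (A (bids(i := t)) i) \<ge> ext_val t (A (bids(i := d)) i))"

end

theory Submission
  imports Defs
begin

text \<open>Bidder \<open>i\<close> is served at prices formed by the bidders processed before it, so its own
  declaration only selects a bundle from a posted price menu. If a false declaration \<open>d\<close>
  obtains a bundle \<open>S\<close> whose true value passes verification, then the true bundle
  \<open>T \<subseteq> S\<close> realising that value is worth at least the declared value of \<open>S\<close>, hence at least
  the price of \<open>S\<close>, hence at least the price of \<open>T\<close>: it is affordable for the truthful
  declaration, which therefore obtains a bundle of at least the same true value.\<close>

lemma finite_values_below:
  "finite (snd t) \<Longrightarrow> finite {fst t S | S. S \<in> snd t \<and> S \<subseteq> T}"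
  by (rule finite_subset[of _ "fst t ` snd t"]) auto

lemma ext_val_ge:
  assumes "finite (snd t)" "S \<in> snd t" "S \<subseteq> T"
  shows "fst t S \<le> ext_val t T"
  using assms by (auto simp: ext_val_def intro!: Max_ge finite_values_below)

lemma ext_val_attained:
  assumes "finite (snd t)" "\<exists>S\<in>snd t. S \<subseteq> T"
  shows "\<exists>S\<in>snd t. S \<subseteq> T \<and> ext_val t T = fst t S"
proof -
  have "ext_val t T = Max {fst t S | S. S \<in> snd t \<and> S \<subseteq> T}"
    using assms(2) by (simp add: ext_val_def)
  moreover have "Max {fst t S | S. S \<in> snd t \<and> S \<subseteq> T} \<in> {fst t S | S. S \<in> snd t \<and> S \<subseteq> T}"
    using assms by (intro Max_in finite_values_below) auto
  ultimately show ?thesis by auto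
qed

lemma ext_val_nonneg:
  assumes "finite (snd t)" "\<forall>S\<in>snd t. fst t S \<ge> 0"
  shows "ext_val t T \<ge> 0"
proof (cases "\<exists>S\<in>snd t. S \<subseteq> T")
  case True
  then obtain S where "S \<in> snd t" "S \<subseteq> T" by blast
  then have "fst t S \<le> ext_val t T" by (rule ext_val_ge[OF assms(1)])
  with assms(2) \<open>S \<in> snd t\<close> show ?thesis by force
qed (simp add: ext_val_def)

lemma choose_bundle_maximal:
  assumes "finite (snd d)" "affordable d p \<noteq> {}"
  shows "choose_bundle d p \<in> affordable d p"
    and "\<forall>S\<in>affordable d p. fst d S \<le> fst d (choose_bundle d p)"
proof -
  have fin: "finite (fst d ` affordable d p)"
    using assms(1) by (simp add: affordable_def)
  have "Max (fst d ` affordable d p) \<in> fst d ` affordable d p"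
    using fin assms(2) by (intro Max_in) auto
  then obtain S where S: "S \<in> affordable d p" "fst d S = Max (fst d ` affordable d p)"
    by auto
  then have "\<exists>S. S \<in> affordable d p \<and> (\<forall>S'\<in>affordable d p. fst d S' \<le> fst d S)"
    using Max_ge[OF fin] by auto
  from someI_ex[OF this] assms(2)
  show "choose_bundle d p \<in> affordable d p"
    and "\<forall>S\<in>affordable d p. fst d S \<le> fst d (choose_bundle d p)"
    by (simp_all add: choose_bundle_def)
qed

text \<open>No distinctness is needed: the update at the first occurrence of \<open>i\<close> overrides the later ones.\<close>
lemma mpu_run_posted_prices:
  assumes "i \<in> set xs" "\<forall>e. q e \<ge> 0" "r \<ge> 0"
  shows "\<exists>p. (\<forall>e. p e \<ge> 0) \<and> (\<forall>d. mpu_run r (bids(i := d)) xs q i = choose_bundle d p)"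
  using assms(1,2)
proof (induction xs arbitrary: q)
  case (Cons x xs)
  show ?case
  proof (cases "x = i")
    case False
    define q' where "q' = (\<lambda>e. if e \<in> choose_bundle (bids x) q then r * q e else q e)"
    have "\<forall>e. q' e \<ge> 0"
      using Cons.prems(2) assms(3) by (simp add: q'_def)
    moreover have "i \<in> set xs" using Cons.prems(1) False by simp
    ultimately obtain p where "\<forall>e. p e \<ge> 0"
      and "\<forall>d. mpu_run r (bids(i := d)) xs q' i = choose_bundle d p"
      using Cons.IH by blast
    moreover have "mpu_run r (bids(i := d)) (x # xs) q i = mpu_run r (bids(i := d)) xs q' i" for d
      using False by (simp add: Let_def q'_def)
    ultimately show ?thesis by blast
  qed (use Cons.prems in \<open>auto simp: Let_def\<close>)
qed simp

lemma choose_bundle_truthful: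
  assumes "finite U" "valid_decl U k t" "valid_decl U k d" "\<forall>e. p e \<ge> 0"
    and verified: "ext_val d (choose_bundle d p) \<le> ext_val t (choose_bundle d p)"
  shows "ext_val t (choose_bundle d p) \<le> ext_val t (choose_bundle t p)"
proof -
  define S where "S = choose_bundle d p"
  have fin_t: "finite (snd t)" and fin_d: "finite (snd d)"
    using assms(2,3) by (simp_all add: valid_decl_def)
  have "ext_val t S \<le> ext_val t (choose_bundle t p)"
  proof (cases "\<exists>T\<in>snd t. T \<subseteq> S")
    case False
    then have "ext_val t S = 0" by (simp add: ext_val_def)
    then show ?thesis
      using ext_val_nonneg[OF fin_t] assms(2) by (simp add: valid_decl_def)
  next
    case True
    then obtain T where T: "T \<in> snd t" "T \<subseteq> S" "ext_val t S = fst t T"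
      using ext_val_attained[OF fin_t] by blast
    have "{} \<notin> snd t" using assms(2) by (simp add: valid_decl_def)
    then have "S \<noteq> {}" using T by auto
    then have "affordable d p \<noteq> {}" by (auto simp: S_def choose_bundle_def)
    then have S_aff: "S \<in> snd d" "bundle_price p S \<le> fst d S"
      using choose_bundle_maximal(1)[OF fin_d] by (auto simp: S_def affordable_def)
    have "finite S" using S_aff(1) assms(1,3) by (auto simp: valid_decl_def intro: finite_subset)
    then have "bundle_price p T \<le> bundle_price p S"
      unfolding bundle_price_def using T(2) assms(4) by (intro sum_mono2) auto
    also have "\<dots> \<le> fst d S" by (fact S_aff(2))
    also have "\<dots> \<le> ext_val d S" using ext_val_ge[OF fin_d S_aff(1)] by simp
    also have "\<dots> \<le> fst t T" using verified T(3) by (simp add: S_def)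
    finally have T_aff: "T \<in> affordable t p" using T(1) by (simp add: affordable_def)
    then have aff_t: "affordable t p \<noteq> {}" by auto
    have "ext_val t S = fst t T" by (fact T(3))
    also have "\<dots> \<le> fst t (choose_bundle t p)"
      using choose_bundle_maximal(2)[OF fin_t aff_t] T_aff by blast
    also have "\<dots> \<le> ext_val t (choose_bundle t p)"
      using choose_bundle_maximal(1)[OF fin_t aff_t]
      by (intro ext_val_ge[OF fin_t]) (auto simp: affordable_def)
    finally show ?thesis .
  qed
  then show ?thesis by (simp only: S_def)
qed

theorem theorem4:
  fixes U :: "'g set" and n k :: nat and p0 r :: real and ord :: "nat list"
  assumes "finite U" and "p0 > 0" and "r > 1"
    and "distinct ord" and "set ord = {..<n}"
  shows "truthful_verif U k n (mpu_alloc p0 r ord)"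
  unfolding truthful_verif_def
proof (intro allI impI)
  fix i bids t d
  assume "i < n" "valid_decl U k t" "valid_decl U k d"
    and verified: "ext_val d (mpu_alloc p0 r ord (bids(i := d)) i)
      \<le> ext_val t (mpu_alloc p0 r ord (bids(i := d)) i)"
  obtain p where "\<forall>e. p e \<ge> 0"
    and menu: "\<And>d. mpu_alloc p0 r ord (bids(i := d)) i = choose_bundle d p"
    using mpu_run_posted_prices[of i ord "\<lambda>e. p0" r bids] assms \<open>i < n\<close>
    by (auto simp: mpu_alloc_def)
  from choose_bundle_truthful[OF \<open>finite U\<close> \<open>valid_decl U k t\<close> \<open>valid_decl U k d\<close> this(1)]
  show "ext_val t (mpu_alloc p0 r ord (bids(i := d)) i)
      \<le> ext_val t (mpu_alloc p0 r ord (bids(i := t)) i)"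
    using verified unfolding menu .
qed

end
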